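(* Consider a sequence of finite populations indexed by $n\to\infty$, each satisfying Assumption 1, Assumption 2 and the null hypothesis $H_0:\ T_i(1)=T_i(0)$ for all $i$, and condition on all potential event times. Then $\sum_{k=1}^{K-1}\xi_{3k}=n^{1/2}\,O_{\Pr}(1)$, where $$\xi_{3k}=\frac{D_k\,\mathbb{E}(N_k-D_k\mid\boldsymbol{T}(1),\boldsymbol{T}(0),N_k)\,\mathbb{E}\{N_{1k}(N_k-N_{1k})\mid\boldsymbol{T}(1),\boldsymbol{T}(0),N_k\}}{N_k^2(N_k-1)}-\mathbb{E}(D_k\mid\boldsymbol{T}(1),\boldsymbol{T}(0))(1-h_k)\phi_k(1-\phi_k).$$
   Context: Unit $i$ ($1\le i\le n$) has potential event times $T_i(1),T_i(0)\ge 0$ (fixed constants), potential censoring times $C_i(1),C_i(0)\in[0,\infty]$, treatment indicator $Z_i\in\{0,1\}$; bold letters denote $n$-vectors. Assumption 1: conditional on all potential event and censoring times, the $Z_i$ are i.i.d. Bernoulli$(p_1)$, $p_1=1-p_0\in(0,1)$. Assumption 2: $(\boldsymbol{C}(1),\boldsymbol{C}(0))$ is independent of $(\boldsymbol{T}(1),\boldsymbol{T}(0))$ and the pairs $(C_i(1),C_i(0))$ are i.i.d. across $i$. $G_z(c)=\Pr(C_i(z)\ge c)$, $G(t)=p_1G_1(t)+p_0G_0(t)$. Realized: $W_i=\min\{T_i,C_i\}$, $\Delta_i=\mathbb{1}(T_i\le C_i)$ with $T_i=Z_iT_i(1)+(1-Z_i)T_i(0)$, $C_i=Z_iC_i(1)+(1-Z_i)C_i(0)$.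 Let $t_1<\dots<t_K$ be the distinct values of $\{T_i(0)\}$, $d_k=\#\{i:T_i(0)=t_k\}$, $n_k=\#\{i:T_i(0)\ge t_k\}$, $h_k=d_k/n_k$, $\phi_k=p_1G_1(t_k)/G(t_k)$; $N_{1k}=\sum_iZ_i\mathbb{1}(W_i\ge t_k)$, $N_k=\sum_i\mathbb{1}(W_i\ge t_k)$, $D_k=\sum_i\Delta_i\mathbb{1}(W_i=t_k)$; convention $0/0:=0$. $X_n=a_nO_{\Pr}(1)$ means $X_n/a_n$ is bounded in probability as $n\to\infty$; all quantities may depend on $n$. *)

theory Defs
  imports "HOL-Probability.Probability"
begin

text \<open>Conditional on the potential event times (treated as fixed constants), the
randomness of population n consists of, for each unit i < n, the triple
(Z_i, C_i(1), C_i(0)). By Assumptions 1 and 2 these triples are i.i.d. with law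
Bernoulli(p1) x mu, where mu is the joint law of (C_i(1), C_i(0)) on [0,infinity]^2.\<close>

type_synonym outcome = "nat \<Rightarrow> bool \<times> ennreal \<times> ennreal"

definition unit_law :: "real \<Rightarrow> (ennreal \<times> ennreal) measure \<Rightarrow> (bool \<times> ennreal \<times> ennreal) measure" where
  "unit_law p \<mu> = measure_pmf (bernoulli_pmf p) \<Otimes>\<^sub>M \<mu>"

definition pop_space :: "nat \<Rightarrow> real \<Rightarrow> (ennreal \<times> ennreal) measure \<Rightarrow> outcome measure" where
  "pop_space n p \<mu> = PiM {..<n} (\<lambda>_. unit_law p \<mu>)"

definition Zr :: "outcome \<Rightarrow> nat \<Rightarrow> bool" where
  "Zr \<omega> i = fst (\<omega> i)"

definition Cr :: "outcome \<Rightarrow> nat \<Rightarrow> ennreal" where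
  "Cr \<omega> i = (if Zr \<omega> i then fst (snd (\<omega> i)) else snd (snd (\<omega> i)))"

definition Tr :: "(nat \<Rightarrow> real) \<Rightarrow> (nat \<Rightarrow> real) \<Rightarrow> outcome \<Rightarrow> nat \<Rightarrow> real" where
  "Tr T1 T0 \<omega> i = (if Zr \<omega> i then T1 i else T0 i)"

definition Wr :: "(nat \<Rightarrow> real) \<Rightarrow> (nat \<Rightarrow> real) \<Rightarrow> outcome \<Rightarrow> nat \<Rightarrow> ennreal" where
  "Wr T1 T0 \<omega> i = min (ennreal (Tr T1 T0 \<omega> i)) (Cr \<omega> i)"

definition Delta :: "(nat \<Rightarrow> real) \<Rightarrow> (nat \<Rightarrow> real) \<Rightarrow> outcome \<Rightarrow> nat \<Rightarrow> bool" where
  "Delta T1 T0 \<omega> i = (ennreal (Tr T1 T0 \<omega> i) \<le> Cr \<omega> i)"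

text \<open>distinct values t_1 < ... < t_K of T_i(0), i < n (1-indexed)\<close>
definition Ktimes :: "nat \<Rightarrow> (nat \<Rightarrow> real) \<Rightarrow> nat" where
  "Ktimes n T0 = card (T0 ` {..<n})"

definition tk :: "nat \<Rightarrow> (nat \<Rightarrow> real) \<Rightarrow> nat \<Rightarrow> real" where
  "tk n T0 k = sorted_list_of_set (T0 ` {..<n}) ! (k - 1)"

definition dk :: "nat \<Rightarrow> (nat \<Rightarrow> real) \<Rightarrow> nat \<Rightarrow> nat" where
  "dk n T0 k = card {i. i < n \<and> T0 i = tk n T0 k}"

definition nk :: "nat \<Rightarrow> (nat \<Rightarrow> real) \<Rightarrow> nat \<Rightarrow> nat" where
  "nk n T0 k = card {i. i < n \<and> tk n T0 k \<le> T0 i}"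

definition hk :: "nat \<Rightarrow> (nat \<Rightarrow> real) \<Rightarrow> nat \<Rightarrow> real" where
  "hk n T0 k = real (dk n T0 k) / real (nk n T0 k)"

definition Gz :: "(ennreal \<times> ennreal) measure \<Rightarrow> bool \<Rightarrow> real \<Rightarrow> real" where
  "Gz \<mu> z c = measure \<mu> {x \<in> space \<mu>. ennreal c \<le> (if z then fst x else snd x)}"

definition Gmix :: "real \<Rightarrow> (ennreal \<times> ennreal) measure \<Rightarrow> real \<Rightarrow> real" where
  "Gmix p \<mu> c = p * Gz \<mu> True c + (1 - p) * Gz \<mu> False c"

text \<open>phi_k = p1 G1(t_k) / G(t_k) (Isabelle's x / 0 = 0 matches the 0/0 := 0 convention)\<close>
definition phik :: "nat \<Rightarrow> real \<Rightarrow> (ennreal \<times> ennreal) measure \<Rightarrow> (nat \<Rightarrow> real) \<Rightarrow> nat \<Rightarrow> real" where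
  "phik n p \<mu> T0 k = p * Gz \<mu> True (tk n T0 k) / Gmix p \<mu> (tk n T0 k)"

definition N1k :: "nat \<Rightarrow> (nat \<Rightarrow> real) \<Rightarrow> (nat \<Rightarrow> real) \<Rightarrow> nat \<Rightarrow> outcome \<Rightarrow> real" where
  "N1k n T1 T0 k \<omega> = real (card {i. i < n \<and> Zr \<omega> i \<and> ennreal (tk n T0 k) \<le> Wr T1 T0 \<omega> i})"

definition Nk :: "nat \<Rightarrow> (nat \<Rightarrow> real) \<Rightarrow> (nat \<Rightarrow> real) \<Rightarrow> nat \<Rightarrow> outcome \<Rightarrow> real" where
  "Nk n T1 T0 k \<omega> = real (card {i. i < n \<and> ennreal (tk n T0 k) \<le> Wr T1 T0 \<omega> i})"

definition Dk :: "nat \<Rightarrow> (nat \<Rightarrow> real) \<Rightarrow> (nat \<Rightarrow> real) \<Rightarrow> nat \<Rightarrow> outcome \<Rightarrow> real" where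
  "Dk n T1 T0 k \<omega> = real (card {i. i < n \<and> Delta T1 T0 \<omega> i \<and> Wr T1 T0 \<omega> i = ennreal (tk n T0 k)})"

definition cond_exp_disc :: "'a measure \<Rightarrow> ('a \<Rightarrow> real) \<Rightarrow> ('a \<Rightarrow> 'b) \<Rightarrow> 'a \<Rightarrow> real" where
  "cond_exp_disc M X Y \<omega> =
     (\<integral>x. indicator {x \<in> space M. Y x = Y \<omega>} x * X x \<partial>M) / measure M {x \<in> space M. Y x = Y \<omega>}"

definition xi3 :: "nat \<Rightarrow> real \<Rightarrow> (ennreal \<times> ennreal) measure \<Rightarrow> (nat \<Rightarrow> real) \<Rightarrow> (nat \<Rightarrow> real)
                    \<Rightarrow> nat \<Rightarrow> outcome \<Rightarrow> real" where
  "xi3 n p \<mu> T1 T0 k \<omega> =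
     (let M = pop_space n p \<mu>; N = Nk n T1 T0 k; D = Dk n T1 T0 k; N1 = N1k n T1 T0 k in
      D \<omega> * cond_exp_disc M (\<lambda>x. N x - D x) N \<omega>
          * cond_exp_disc M (\<lambda>x. N1 x * (N x - N1 x)) N \<omega>
        / ((N \<omega>)\<^sup>2 * (N \<omega> - 1))
      - (\<integral>x. D x \<partial>M) * (1 - hk n T0 k) * phik n p \<mu> T0 k * (1 - phik n p \<mu> T0 k))"

definition bounded_in_prob :: "(nat \<Rightarrow> 'a measure) \<Rightarrow> (nat \<Rightarrow> 'a \<Rightarrow> real) \<Rightarrow> bool" where
  "bounded_in_prob M X \<longleftrightarrow>
     (\<forall>\<epsilon>>0. \<exists>B. \<forall>\<^sub>F n in sequentially. measure (M n) {\<omega> \<in> space (M n). B < \<bar>X n \<omega>\<bar>} < \<epsilon>)"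

end

theory Submission
  imports Defs
begin

text \<open>Under \<open>H\<^sub>0\<close>, a unit with \<open>t\<^sub>k \<le> T\<^sub>i(0)\<close> is at risk at \<open>t\<^sub>k\<close> iff \<open>t\<^sub>k \<le> C\<^sub>i\<close>, so \<open>N\<^sub>k\<close> is a
  sum of i.i.d. indicators over the fixed risk set \<open>{i. t\<^sub>k \<le> T\<^sub>i(0)}\<close>, and \<open>D\<^sub>k\<close> is the same sum
  over the tie set \<open>{i. T\<^sub>i(0) = t\<^sub>k}\<close>. By exchangeability, conditionally on \<open>N\<^sub>k = m\<close> one has
  \<open>E(N\<^sub>k - D\<^sub>k) = (1 - h\<^sub>k) m\<close> and \<open>E(N\<^sub>1\<^sub>k (N\<^sub>k - N\<^sub>1\<^sub>k)) = \<phi>\<^sub>k (1 - \<phi>\<^sub>k) m (m - 1)\<close>. Hence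
  \<open>\<xi>\<^sub>3\<^sub>k = c\<^sub>k (D\<^sub>k - E D\<^sub>k)\<close> with \<open>c\<^sub>k = (1 - h\<^sub>k) \<phi>\<^sub>k (1 - \<phi>\<^sub>k) \<in> [0,1]\<close>, except when \<open>N\<^sub>k = 1\<close>.
  Summed over \<open>k\<close>, the centred part is a sum over units of independent, centred terms bounded
  by 1, so its second moment is at most \<open>n\<close>; the exceptional terms add at most 1, because
  a death at \<open>t\<^sub>k\<close> and another at a later time force \<open>N\<^sub>k \<ge> 2\<close>. Chebyshev's inequality
  concludes.\<close>

section \<open>Products of i.i.d. coordinates\<close>

lemma card_filter_eq_sum: "finite A \<Longrightarrow> real (card {i \<in> A. P i}) = (\<Sum>i\<in>A. if P i then 1 else 0)"
  by (simp add: sum.inter_filter[symmetric])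

lemma integral_double_sum:
  assumes "\<And>i j. i \<in> A \<Longrightarrow> j \<in> B i \<Longrightarrow> integrable M (f i j)"
  shows "(\<integral>x. (\<Sum>i\<in>A. \<Sum>j\<in>B i. f i j x) \<partial>M) = (\<Sum>i\<in>A. \<Sum>j\<in>B i. \<integral>x. f i j x \<partial>M)"
proof -
  have "(\<integral>x. (\<Sum>i\<in>A. \<Sum>j\<in>B i. f i j x) \<partial>M) = (\<Sum>i\<in>A. \<integral>x. (\<Sum>j\<in>B i. f i j x) \<partial>M)"
    by (rule Bochner_Integration.integral_sum) (use assms in auto)
  also have "\<dots> = (\<Sum>i\<in>A. \<Sum>j\<in>B i. \<integral>x. f i j x \<partial>M)"
    by (intro sum.cong refl Bochner_Integration.integral_sum) (use assms in auto)
  finally show ?thesis .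
qed

locale iid_product =
  fixes U :: "'a measure" and I :: "'i set"
  assumes prob_space_U: "prob_space U" and finite_I: "finite I"
begin

abbreviation "M \<equiv> PiM I (\<lambda>_. U)"

lemma prob_space_M: "prob_space M"
  by (rule prob_space_PiM) (rule prob_space_U)

lemma finite_measure_M: "finite_measure M"
  using prob_space_M by (rule prob_space.finite_measure)

lemma measurable_component:
  "i \<in> I \<Longrightarrow> f \<in> borel_measurable U \<Longrightarrow> (\<lambda>x. f (x i)) \<in> borel_measurable M"
  using measurable_comp[OF measurable_component_singleton, of i I f] by (simp add: comp_def)

lemma integrable_bounded:
  "(F :: ('i \<Rightarrow> 'a) \<Rightarrow> real) \<in> borel_measurable M \<Longrightarrow> (\<And>x. \<bar>F x\<bar> \<le> B) \<Longrightarrow> integrable M F"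
  by (rule finite_measure.integrable_const_bound[OF finite_measure_M, where B=B]) auto

lemma integrable_bounded_U:
  "(f :: 'a \<Rightarrow> real) \<in> borel_measurable U \<Longrightarrow> (\<And>u. \<bar>f u\<bar> \<le> B) \<Longrightarrow> integrable U f"
  by (rule finite_measure.integrable_const_bound[OF prob_space.finite_measure[OF prob_space_U], where B=B])
     auto

lemma integral_mult_component:
  fixes F :: "('i \<Rightarrow> 'a) \<Rightarrow> real" and f :: "'a \<Rightarrow> real"
  assumes i: "i \<in> I" and F_meas: "F \<in> borel_measurable M" and F_bound: "\<And>x. \<bar>F x\<bar> \<le> B"
    and f_meas: "f \<in> borel_measurable U" and f_bound: "\<And>u. \<bar>f u\<bar> \<le> C"
    and F_indep: "\<And>x y. F (x(i := y)) = F x"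
  shows "(\<integral>x. F x * f (x i) \<partial>M) = (\<integral>x. F x \<partial>M) * (\<integral>u. f u \<partial>U)"
proof -
  interpret U: prob_space U by (rule prob_space_U)
  interpret P: product_prob_space "\<lambda>_. U" I by unfold_locales
  define J where "J = I - {i}"
  have IJ: "I = insert i J" "i \<notin> J" "finite J" using i finite_I by (auto simp: J_def)
  have int_F: "integrable M F" by (rule integrable_bounded[OF F_meas F_bound])
  have int_Ff: "integrable M (\<lambda>x. F x * f (x i))"
    by (rule integrable_bounded[where B="B * C"])
       (use F_meas f_meas i F_bound f_bound in
         \<open>auto intro!: measurable_component simp: abs_mult mult_mono' order_trans[OF abs_ge_zero]\<close>)
  have "(\<integral>x. F x * f (x i) \<partial>M) = (\<integral>x. (\<integral>y. F (x(i := y)) * f y \<partial>U) \<partial>PiM J (\<lambda>_. U))"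
    using P.product_integral_insert[OF IJ(3,2), of "\<lambda>x. F x * f (x i)"] int_Ff IJ(1) by simp
  also have "\<dots> = (\<integral>x. F x \<partial>PiM J (\<lambda>_. U)) * (\<integral>y. f y \<partial>U)"
    by (simp add: F_indep)
  also have "(\<integral>x. F x \<partial>PiM J (\<lambda>_. U)) = (\<integral>x. (\<integral>y. F (x(i := y)) \<partial>U) \<partial>PiM J (\<lambda>_. U))"
    by (simp add: F_indep U.prob_space)
  also have "\<dots> = (\<integral>x. F x \<partial>M)"
    using P.product_integral_insert[OF IJ(3,2), of F] int_F IJ(1) by simp
  finally show ?thesis .
qed

lemma integral_component:
  fixes f :: "'a \<Rightarrow> real"
  assumes i: "i \<in> I" and f_meas: "f \<in> borel_measurable U" and f_bound: "\<And>u. \<bar>f u\<bar> \<le> C"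
  shows "(\<integral>x. f (x i) \<partial>M) = (\<integral>u. f u \<partial>U)"
proof -
  have "(\<integral>x. 1 * f (x i) \<partial>M) = (\<integral>x. 1 \<partial>M) * (\<integral>u. f u \<partial>U)"
    by (rule integral_mult_component[where B=1, OF i _ _ f_meas f_bound]) auto
  then show ?thesis using prob_space.prob_space[OF prob_space_M] by simp
qed

lemma integral_sum_components_squared_le:
  fixes Y :: "'i \<Rightarrow> 'a \<Rightarrow> real"
  assumes Y_meas: "\<And>i. Y i \<in> borel_measurable U" and Y_bound: "\<And>i u. \<bar>Y i u\<bar> \<le> 1"
    and Y_centred: "\<And>i. (\<integral>u. Y i u \<partial>U) = 0"
  shows "(\<integral>x. (\<Sum>i\<in>I. Y i (x i))\<^sup>2 \<partial>M) \<le> real (card I)"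
proof -
  have int_YY: "integrable M (\<lambda>x. Y i (x i) * Y j (x j))" if "i \<in> I" "j \<in> I" for i j
    by (rule integrable_bounded[where B=1])
       (use that Y_bound in \<open>auto intro!: borel_measurable_times measurable_component Y_meas
          simp: abs_mult mult_le_one\<close>)
  have diag: "(\<Sum>j\<in>I. \<integral>x. Y i (x i) * Y j (x j) \<partial>M) \<le> 1" if i: "i \<in> I" for i
  proof -
    have off_diag: "(\<integral>x. Y i (x i) * Y j (x j) \<partial>M) = 0" if "j \<in> I" "j \<noteq> i" for j
      using integral_mult_component[where B=1 and C=1, OF i, of "\<lambda>x. Y j (x j)"] that Y_bound
      by (simp add: measurable_component Y_meas Y_centred mult.commute)
    have "(\<Sum>j\<in>I. \<integral>x. Y i (x i) * Y j (x j) \<partial>M) = (\<integral>x. Y i (x i) * Y i (x i) \<partial>M)"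
      using sum.remove[OF finite_I i, of "\<lambda>j. \<integral>x. Y i (x i) * Y j (x j) \<partial>M"] off_diag by simp
    also have "\<dots> \<le> (\<integral>x. 1 \<partial>M)"
    proof (rule Bochner_Integration.integral_mono[OF int_YY[OF i i]])
      show "integrable M (\<lambda>x. 1::real)" by (rule integrable_bounded[where B=1]) auto
      show "Y i (x i) * Y i (x i) \<le> 1" for x
        using Y_bound[of i "x i"] by (simp add: abs_le_square_iff[of _ 1, simplified] power2_eq_square)
    qed
    also have "\<dots> = 1" using prob_space.prob_space[OF prob_space_M] by simp
    finally show ?thesis .
  qed
  have "(\<integral>x. (\<Sum>i\<in>I. Y i (x i))\<^sup>2 \<partial>M) = (\<Sum>i\<in>I. \<Sum>j\<in>I. \<integral>x. Y i (x i) * Y j (x j) \<partial>M)"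
    by (simp add: power2_eq_square sum_product integral_double_sum int_YY)
  also have "\<dots> \<le> (\<Sum>i\<in>I. 1)" by (intro sum_mono diag)
  finally show ?thesis by simp
qed

end

section \<open>Exchangeable counts of split indicators\<close>

text \<open>\<open>b\<close> and \<open>c\<close> play the roles of "at risk in the treatment arm" and "at risk in the control
  arm", \<open>a\<close> of "at risk".\<close>

locale split_count = iid_product U I for U :: "'a measure" and I :: "'i set" +
  fixes a b c :: "'a \<Rightarrow> real"
  assumes b_meas[measurable]: "b \<in> borel_measurable U"
    and c_meas[measurable]: "c \<in> borel_measurable U"
    and a_split: "\<And>u. a u = b u + c u"
    and b_01: "\<And>u. b u = 0 \<or> b u = 1"
    and c_01: "\<And>u. c u = 0 \<or> c u = 1"
    and b_c_disjoint: "\<And>u. b u * c u = 0"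
begin

definition tally :: "'i set \<Rightarrow> ('i \<Rightarrow> 'a) \<Rightarrow> real" where
  "tally S x = (\<Sum>l\<in>S. a (x l))"

definition tally_is :: "'i set \<Rightarrow> real \<Rightarrow> ('i \<Rightarrow> 'a) \<Rightarrow> real" where
  "tally_is S r x = (if tally S x = r then 1 else 0)"

definition "mean_a = (\<integral>u. a u \<partial>U)"
definition "mean_b = (\<integral>u. b u \<partial>U)"
definition "mean_c = (\<integral>u. c u \<partial>U)"

lemma a_meas[measurable]: "a \<in> borel_measurable U"
proof -
  have "a = (\<lambda>u. b u + c u)" using a_split by auto
  then show ?thesis by simp
qed

lemma a_01: "a u = 0 \<or> a u = 1"
  using a_split[of u] b_01[of u] c_01[of u] b_c_disjoint[of u] by auto

lemma abs_a_le_1: "\<bar>a u\<bar> \<le> 1" using a_01[of u] by auto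
lemma abs_b_le_1: "\<bar>b u\<bar> \<le> 1" using b_01[of u] by auto
lemma abs_c_le_1: "\<bar>c u\<bar> \<le> 1" using c_01[of u] by auto
lemma abs_one_minus_a_le_1: "\<bar>1 - a u\<bar> \<le> 1" using a_01[of u] by auto

lemma a_eq_1_if_nonzero: "a u \<noteq> 0 \<Longrightarrow> a u = 1" using a_01[of u] by auto
lemma a_eq_1_if_b_nonzero: "b u \<noteq> 0 \<Longrightarrow> a u = 1"
  using a_split[of u] b_01[of u] b_c_disjoint[of u] by auto
lemma a_eq_1_if_c_nonzero: "c u \<noteq> 0 \<Longrightarrow> a u = 1"
  using a_split[of u] c_01[of u] b_c_disjoint[of u] by auto

lemma mean_b_nonneg: "0 \<le> mean_b" and mean_c_nonneg: "0 \<le> mean_c"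
  and mean_a_eq: "mean_a = mean_b + mean_c"
proof -
  have "0 \<le> b u" "0 \<le> c u" for u using b_01[of u] c_01[of u] by auto
  then show "0 \<le> mean_b" "0 \<le> mean_c" unfolding mean_b_def mean_c_def
    by (simp_all add: Bochner_Integration.integral_nonneg)
  show "mean_a = mean_b + mean_c" unfolding mean_a_def mean_b_def mean_c_def a_split
    by (rule Bochner_Integration.integral_add; rule integrable_bounded_U[where B=1])
       (auto intro: abs_b_le_1 abs_c_le_1)
qed

lemma tally_meas: "S \<subseteq> I \<Longrightarrow> tally S \<in> borel_measurable M"
  unfolding tally_def by (intro borel_measurable_sum measurable_component) auto

lemma tally_is_meas: "S \<subseteq> I \<Longrightarrow> tally_is S r \<in> borel_measurable M"
proof -
  assume "S \<subseteq> I"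
  then have [measurable]: "tally S \<in> borel_measurable M" by (rule tally_meas)
  show ?thesis unfolding tally_is_def by measurable
qed

lemma abs_tally_le: "finite S \<Longrightarrow> \<bar>tally S x\<bar> \<le> real (card S)"
proof -
  assume "finite S"
  have "\<bar>tally S x\<bar> \<le> (\<Sum>l\<in>S. \<bar>a (x l)\<bar>)" unfolding tally_def by (rule sum_abs)
  also have "\<dots> \<le> (\<Sum>l\<in>S. 1)" by (intro sum_mono abs_a_le_1)
  finally show ?thesis by simp
qed

lemma abs_tally_is_le_1: "\<bar>tally_is S r x\<bar> \<le> 1"
  by (simp add: tally_is_def)

lemma abs_tally_is_mult_tally_le: "finite S \<Longrightarrow> \<bar>tally_is T r x * tally S x\<bar> \<le> real (card S)"
  using abs_tally_le[of S x] by (simp add: tally_is_def)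

lemma tally_is_mult_tally: "tally_is S r x * tally S x = r * tally_is S r x"
  by (simp add: tally_is_def)

lemma tally_upd: "i \<notin> S \<Longrightarrow> tally S (x(i := y)) = tally S x"
  unfolding tally_def by (intro sum.cong) auto

lemma tally_is_upd: "i \<notin> S \<Longrightarrow> tally_is S r (x(i := y)) = tally_is S r x"
  by (simp add: tally_is_def tally_upd)

lemma tally_remove: "finite S \<Longrightarrow> i \<in> S \<Longrightarrow> tally S x = tally (S - {i}) x + a (x i)"
  unfolding tally_def by (simp add: sum.remove add.commute)

lemma measure_tally_eq: "S \<subseteq> I \<Longrightarrow> measure M {x \<in> space M. tally S x = r} = (\<integral>x. tally_is S r x \<partial>M)"
proof -
  have "(\<integral>x. tally_is S r x \<partial>M) = (\<integral>x. indicator {x \<in> space M. tally S x = r} x \<partial>M)"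
    by (rule Bochner_Integration.integral_cong) (auto simp: tally_is_def indicator_def)
  also assume "S \<subseteq> I"
  then have [measurable]: "tally S \<in> borel_measurable M" by (rule tally_meas)
  then have "(\<integral>x. indicator {x \<in> space M. tally S x = r} x \<partial>M) = measure M {x \<in> space M. tally S x = r}"
    by (simp add: Int_absorb2)
  finally show ?thesis ..
qed

lemma cond_exp_disc_tally:
  assumes "S \<subseteq> I"
  shows "cond_exp_disc M X (tally S) \<omega>
    = (\<integral>x. tally_is S (tally S \<omega>) x * X x \<partial>M) / (\<integral>x. tally_is S (tally S \<omega>) x \<partial>M)"
proof -
  have "(\<integral>x. indicator {x \<in> space M. tally S x = tally S \<omega>} x * X x \<partial>M)
      = (\<integral>x. tally_is S (tally S \<omega>) x * X x \<partial>M)"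
    by (rule Bochner_Integration.integral_cong) (auto simp: tally_is_def indicator_def)
  then show ?thesis unfolding cond_exp_disc_def measure_tally_eq[OF assms] by simp
qed

lemma integrable_tally_is_mult_component:
  "S \<subseteq> I \<Longrightarrow> i \<in> I \<Longrightarrow> f \<in> borel_measurable U \<Longrightarrow> (\<And>u. \<bar>f u\<bar> \<le> 1)
   \<Longrightarrow> integrable M (\<lambda>x. tally_is S r x * f (x i))"
  by (rule integrable_bounded[where B=1])
     (auto simp: abs_mult intro!: mult_le_one abs_tally_is_le_1 borel_measurable_times tally_is_meas
        measurable_component)

lemma integral_tally_is_mult_a:
  assumes S: "S \<subseteq> I" and i: "i \<in> S"
  shows "(\<integral>x. tally_is S r x * a (x i) \<partial>M) = (\<integral>x. tally_is (S - {i}) (r - 1) x \<partial>M) * mean_a"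
proof -
  have "finite S" using S finite_I finite_subset by blast
  then have pointwise: "tally_is S r x * a (x i) = tally_is (S - {i}) (r - 1) x * a (x i)" for x
    using a_01[of "x i"] tally_remove[OF _ i, of x] by (auto simp: tally_is_def)
  have "(\<integral>x. tally_is S r x * a (x i) \<partial>M) = (\<integral>x. tally_is (S - {i}) (r - 1) x * a (x i) \<partial>M)"
    by (simp only: pointwise)
  also have "\<dots> = (\<integral>x. tally_is (S - {i}) (r - 1) x \<partial>M) * mean_a"
    unfolding mean_a_def
    by (rule integral_mult_component[where B=1 and C=1])
       (use S i in \<open>auto intro: tally_is_meas abs_tally_is_le_1 abs_a_le_1 tally_is_upd\<close>)
  finally show ?thesis .
qed

lemma integral_tally_is_remove:
  assumes S: "S \<subseteq> I" and i: "i \<in> S"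
  shows "(\<integral>x. tally_is S r x \<partial>M)
    = (1 - mean_a) * (\<integral>x. tally_is (S - {i}) r x \<partial>M) + mean_a * (\<integral>x. tally_is (S - {i}) (r - 1) x \<partial>M)"
proof -
  have "finite S" using S finite_I finite_subset by blast
  have iI: "i \<in> I" and S': "S - {i} \<subseteq> I" using S i by auto
  have pointwise: "tally_is S r x
      = tally_is (S - {i}) r x * (1 - a (x i)) + tally_is (S - {i}) (r - 1) x * a (x i)" for x
    using a_01[of "x i"] tally_remove[OF \<open>finite S\<close> i, of x] by (auto simp: tally_is_def)
  have "(\<integral>x. tally_is S r x \<partial>M)
      = (\<integral>x. tally_is (S - {i}) r x * (1 - a (x i)) \<partial>M) + (\<integral>x. tally_is (S - {i}) (r - 1) x * a (x i) \<partial>M)"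
    unfolding pointwise
    by (intro Bochner_Integration.integral_add integrable_tally_is_mult_component[OF S' iI])
       (auto intro: abs_a_le_1 abs_one_minus_a_le_1)
  also have "(\<integral>x. tally_is (S - {i}) r x * (1 - a (x i)) \<partial>M)
      = (\<integral>x. tally_is (S - {i}) r x \<partial>M) * (\<integral>u. 1 - a u \<partial>U)"
    by (rule integral_mult_component[where B=1 and C=1])
       (use S' iI in \<open>auto intro: tally_is_meas abs_tally_is_le_1 tally_is_upd abs_one_minus_a_le_1\<close>)
  also have "(\<integral>u. 1 - a u \<partial>U) = 1 - mean_a"
    unfolding mean_a_def using prob_space.prob_space[OF prob_space_U]
    by (subst Bochner_Integration.integral_diff) (auto intro: integrable_bounded_U[where B=1] abs_a_le_1)
  also have "(\<integral>x. tally_is (S - {i}) (r - 1) x * a (x i) \<partial>M)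
      = (\<integral>x. tally_is (S - {i}) (r - 1) x \<partial>M) * mean_a"
    unfolding mean_a_def
    by (rule integral_mult_component[where B=1 and C=1])
       (use S' iI in \<open>auto intro: tally_is_meas abs_tally_is_le_1 abs_a_le_1 tally_is_upd\<close>)
  finally show ?thesis by simp
qed

text \<open>Exchangeability: expanding \<open>tally_is S r\<close> at \<open>i\<close> and then at \<open>j\<close> gives a
  formula symmetric in \<open>i\<close> and \<open>j\<close>.\<close>

lemma integral_tally_is_mult_a_swap:
  assumes S: "S \<subseteq> I" and i: "i \<in> S" and j: "j \<in> S"
  shows "(\<integral>x. tally_is S r x * a (x i) \<partial>M) = (\<integral>x. tally_is S r x * a (x j) \<partial>M)"
proof (cases "i = j")
  case False
  have Sij: "S - {i} - {j} = S - {j} - {i}" by auto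
  have "(\<integral>x. tally_is S r x * a (x i) \<partial>M) = (\<integral>x. tally_is (S - {i}) (r - 1) x \<partial>M) * mean_a"
    by (rule integral_tally_is_mult_a[OF S i])
  also have "\<dots> = ((1 - mean_a) * (\<integral>x. tally_is (S - {i} - {j}) (r - 1) x \<partial>M)
      + mean_a * (\<integral>x. tally_is (S - {i} - {j}) (r - 1 - 1) x \<partial>M)) * mean_a"
    using integral_tally_is_remove[of "S - {i}" j "r - 1"] S j False by auto
  also have "\<dots> = (\<integral>x. tally_is (S - {j}) (r - 1) x \<partial>M) * mean_a"
  proof -
    have "S - {j} \<subseteq> I" "i \<in> S - {j}" using S i False by auto
    then show ?thesis unfolding Sij using integral_tally_is_remove[of "S - {j}" i "r - 1"] by simp
  qed
  also have "\<dots> = (\<integral>x. tally_is S r x * a (x j) \<partial>M)"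
    by (rule integral_tally_is_mult_a[OF S j, symmetric])
  finally show ?thesis .
qed simp

lemma integral_tally_is_mult_two_components:
  fixes f g :: "'a \<Rightarrow> real"
  assumes S: "S \<subseteq> I" and i: "i \<in> S" and j: "j \<in> S" and ij: "i \<noteq> j"
    and f_meas: "f \<in> borel_measurable U" and g_meas: "g \<in> borel_measurable U"
    and f_bound: "\<And>u. \<bar>f u\<bar> \<le> 1" and g_bound: "\<And>u. \<bar>g u\<bar> \<le> 1"
    and f_a: "\<And>u. f u \<noteq> 0 \<Longrightarrow> a u = 1" and g_a: "\<And>u. g u \<noteq> 0 \<Longrightarrow> a u = 1"
  shows "(\<integral>x. tally_is S r x * (f (x i) * g (x j)) \<partial>M)
     = (\<integral>x. tally_is (S - {i} - {j}) (r - 2) x \<partial>M) * (\<integral>u. f u \<partial>U) * (\<integral>u. g u \<partial>U)"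
proof -
  have fin: "finite S" using S finite_I finite_subset by blast
  have iI: "i \<in> I" and jI: "j \<in> I" and S': "S - {i} - {j} \<subseteq> I" using S i j by auto
  have tally_S: "tally S x = tally (S - {i} - {j}) x + a (x i) + a (x j)" for x
    using tally_remove[OF fin i, of x] tally_remove[of "S - {i}" j x] fin j ij by simp
  have pointwise:
    "tally_is S r x * (f (x i) * g (x j)) = (tally_is (S - {i} - {j}) (r - 2) x * g (x j)) * f (x i)" for x
  proof (cases "f (x i) = 0 \<or> g (x j) = 0")
    case False
    then have "a (x i) = 1" "a (x j) = 1" using f_a g_a by auto
    then show ?thesis using tally_S[of x] by (auto simp: tally_is_def)
  qed auto
  have "(\<integral>x. tally_is S r x * (f (x i) * g (x j)) \<partial>M)
      = (\<integral>x. (tally_is (S - {i} - {j}) (r - 2) x * g (x j)) * f (x i) \<partial>M)"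
    by (simp only: pointwise)
  also have "\<dots> = (\<integral>x. tally_is (S - {i} - {j}) (r - 2) x * g (x j) \<partial>M) * (\<integral>u. f u \<partial>U)"
    by (rule integral_mult_component[OF iI _ _ f_meas f_bound, where B=1])
       (use ij S' jI g_bound in \<open>auto intro!: borel_measurable_times tally_is_meas measurable_component g_meas
          simp: tally_is_upd abs_mult mult_le_one abs_tally_is_le_1\<close>)
  also have "(\<integral>x. tally_is (S - {i} - {j}) (r - 2) x * g (x j) \<partial>M)
      = (\<integral>x. tally_is (S - {i} - {j}) (r - 2) x \<partial>M) * (\<integral>u. g u \<partial>U)"
    by (rule integral_mult_component[OF jI tally_is_meas[OF S'] abs_tally_is_le_1 g_meas g_bound])
       (simp add: tally_is_upd)
  finally show ?thesis by simp
qed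

lemma integral_tally_is_mult_tally:
  assumes S: "S \<subseteq> I" and T: "T \<subseteq> I"
  shows "(\<integral>x. tally_is T r x * tally S x \<partial>M) = (\<Sum>i\<in>S. \<integral>x. tally_is T r x * a (x i) \<partial>M)"
  unfolding tally_def sum_distrib_left
  by (rule Bochner_Integration.integral_sum)
     (use S in \<open>auto intro!: integrable_tally_is_mult_component[OF T] abs_a_le_1\<close>)

lemma integral_tally_is_mult_tally_diff:
  assumes E: "E \<subseteq> R" and R: "R \<subseteq> I" and R_ne: "R \<noteq> {}"
  shows "(\<integral>x. tally_is R m x * (tally R x - tally E x) \<partial>M)
    = (1 - real (card E) / real (card R)) * m * (\<integral>x. tally_is R m x \<partial>M)"
proof -
  have fin: "finite R" using R finite_I finite_subset by blast
  have E': "E \<subseteq> I" using E R by auto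
  obtain i0 where i0: "i0 \<in> R" using R_ne by auto
  define q where "q = (\<integral>x. tally_is R m x * a (x i0) \<partial>M)"
  have q: "(\<integral>x. tally_is R m x * a (x i) \<partial>M) = q" if "i \<in> R" for i
    unfolding q_def by (rule integral_tally_is_mult_a_swap[OF R that i0])
  have int_R: "(\<integral>x. tally_is R m x * tally R x \<partial>M) = real (card R) * q"
    using integral_tally_is_mult_tally[OF R R] q by simp
  have int_E: "(\<integral>x. tally_is R m x * tally E x \<partial>M) = real (card E) * q"
    using integral_tally_is_mult_tally[OF E' R] q E by (simp add: subset_eq)
  have "(\<integral>x. tally_is R m x * (tally R x - tally E x) \<partial>M)
      = (\<integral>x. tally_is R m x * tally R x \<partial>M) - (\<integral>x. tally_is R m x * tally E x \<partial>M)"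
    unfolding right_diff_distrib
  proof (rule Bochner_Integration.integral_diff)
    show "integrable M (\<lambda>x. tally_is R m x * tally R x)"
      by (rule integrable_bounded[where B="real (card R)"])
         (auto intro!: borel_measurable_times tally_is_meas tally_meas R abs_tally_is_mult_tally_le fin)
    show "integrable M (\<lambda>x. tally_is R m x * tally E x)"
      by (rule integrable_bounded[where B="real (card E)"])
         (auto intro!: borel_measurable_times tally_is_meas tally_meas R E' abs_tally_is_mult_tally_le
            finite_subset[OF E fin])
  qed
  also have "\<dots> = (1 - real (card E) / real (card R)) * (real (card R) * q)"
    using int_R int_E fin R_ne by (simp add: field_simps)
  also have "real (card R) * q = m * (\<integral>x. tally_is R m x \<partial>M)"
    by (simp flip: int_R add: tally_is_mult_tally)
  finally show ?thesis by simp
qed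

definition pair_mass :: "'i set \<Rightarrow> real \<Rightarrow> real" where
  "pair_mass R m = (\<Sum>i\<in>R. \<Sum>j\<in>R - {i}. \<integral>x. tally_is (R - {i} - {j}) (m - 2) x \<partial>M)"

lemma integral_tally_is_mult_pairs:
  fixes f g :: "'a \<Rightarrow> real"
  assumes R: "R \<subseteq> I"
    and f_meas: "f \<in> borel_measurable U" and g_meas: "g \<in> borel_measurable U"
    and f_bound: "\<And>u. \<bar>f u\<bar> \<le> 1" and g_bound: "\<And>u. \<bar>g u\<bar> \<le> 1"
    and f_a: "\<And>u. f u \<noteq> 0 \<Longrightarrow> a u = 1" and g_a: "\<And>u. g u \<noteq> 0 \<Longrightarrow> a u = 1"
  shows "(\<integral>x. tally_is R m x * (\<Sum>i\<in>R. \<Sum>j\<in>R - {i}. f (x i) * g (x j)) \<partial>M)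
    = (\<integral>u. f u \<partial>U) * (\<integral>u. g u \<partial>U) * pair_mass R m"
proof -
  have int: "integrable M (\<lambda>x. tally_is R m x * (f (x i) * g (x j)))" if "i \<in> R" "j \<in> R" for i j
    by (rule integrable_bounded[where B=1])
       (use that R f_bound g_bound in \<open>auto intro!: borel_measurable_times tally_is_meas
          measurable_component f_meas g_meas simp: abs_mult mult_le_one abs_tally_is_le_1\<close>)
  have "(\<integral>x. tally_is R m x * (\<Sum>i\<in>R. \<Sum>j\<in>R - {i}. f (x i) * g (x j)) \<partial>M)
      = (\<Sum>i\<in>R. \<Sum>j\<in>R - {i}. \<integral>x. tally_is R m x * (f (x i) * g (x j)) \<partial>M)"
    unfolding sum_distrib_left by (rule integral_double_sum) (auto intro: int)
  also have "\<dots> = (\<Sum>i\<in>R. \<Sum>j\<in>R - {i}.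
      (\<integral>x. tally_is (R - {i} - {j}) (m - 2) x \<partial>M) * (\<integral>u. f u \<partial>U) * (\<integral>u. g u \<partial>U))"
    by (intro sum.cong refl integral_tally_is_mult_two_components R f_meas g_meas f_bound g_bound f_a g_a)
       auto
  finally show ?thesis
    by (simp add: pair_mass_def sum_distrib_left sum_distrib_right algebra_simps)
qed

lemma sum_b_mult_sum_c:
  assumes "finite R"
  shows "(\<Sum>l\<in>R. b (x l)) * (tally R x - (\<Sum>l\<in>R. b (x l))) = (\<Sum>i\<in>R. \<Sum>j\<in>R - {i}. b (x i) * c (x j))"
proof -
  have "tally R x - (\<Sum>l\<in>R. b (x l)) = (\<Sum>l\<in>R. c (x l))"
    unfolding tally_def a_split by (simp add: sum.distrib)
  then have "(\<Sum>l\<in>R. b (x l)) * (tally R x - (\<Sum>l\<in>R. b (x l))) = (\<Sum>i\<in>R. \<Sum>j\<in>R. b (x i) * c (x j))"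
    by (simp add: sum_product)
  also have "\<dots> = (\<Sum>i\<in>R. \<Sum>j\<in>R - {i}. b (x i) * c (x j))"
  proof (rule sum.cong[OF refl])
    fix i assume "i \<in> R"
    then show "(\<Sum>j\<in>R. b (x i) * c (x j)) = (\<Sum>j\<in>R - {i}. b (x i) * c (x j))"
      using sum.remove[OF assms, of i "\<lambda>j. b (x i) * c (x j)"] b_c_disjoint[of "x i"] by simp
  qed
  finally show ?thesis .
qed

lemma tally_mult_tally_minus_1:
  assumes "finite R"
  shows "tally R x * (tally R x - 1) = (\<Sum>i\<in>R. \<Sum>j\<in>R - {i}. a (x i) * a (x j))"
proof -
  have idem: "a u * a u = a u" for u using a_01[of u] by auto
  have "tally R x * tally R x = (\<Sum>i\<in>R. \<Sum>j\<in>R. a (x i) * a (x j))"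
    unfolding tally_def by (simp add: sum_product)
  also have "\<dots> = (\<Sum>i\<in>R. a (x i) + (\<Sum>j\<in>R - {i}. a (x i) * a (x j)))"
    using assms by (intro sum.cong refl) (simp add: sum.remove idem)
  also have "\<dots> = tally R x + (\<Sum>i\<in>R. \<Sum>j\<in>R - {i}. a (x i) * a (x j))"
    unfolding tally_def by (simp add: sum.distrib)
  finally show ?thesis by (simp add: algebra_simps)
qed

lemma integral_tally_is_mult_bc_pairs:
  assumes R: "R \<subseteq> I"
  shows "(\<integral>x. tally_is R m x * ((\<Sum>l\<in>R. b (x l)) * (tally R x - (\<Sum>l\<in>R. b (x l)))) \<partial>M)
    = mean_b * mean_c * pair_mass R m"
proof -
  have "finite R" using R finite_I finite_subset by blast
  then show ?thesis unfolding sum_b_mult_sum_c[OF \<open>finite R\<close>] mean_b_def mean_c_def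
    by (intro integral_tally_is_mult_pairs R b_meas c_meas abs_b_le_1 abs_c_le_1 a_eq_1_if_b_nonzero
        a_eq_1_if_c_nonzero)
qed

lemma integral_tally_is_falling_factorial:
  assumes R: "R \<subseteq> I"
  shows "m * (m - 1) * (\<integral>x. tally_is R m x \<partial>M) = mean_a * mean_a * pair_mass R m"
proof -
  have "finite R" using R finite_I finite_subset by blast
  have "(\<integral>x. tally_is R m x * (tally R x * (tally R x - 1)) \<partial>M) = (\<integral>x. m * (m - 1) * tally_is R m x \<partial>M)"
    by (rule Bochner_Integration.integral_cong) (auto simp: tally_is_def)
  then have "m * (m - 1) * (\<integral>x. tally_is R m x \<partial>M) = (\<integral>x. tally_is R m x * (tally R x * (tally R x - 1)) \<partial>M)"
    by simp
  also have "\<dots> = mean_a * mean_a * pair_mass R m"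
    unfolding tally_mult_tally_minus_1[OF \<open>finite R\<close>] mean_a_def
    by (intro integral_tally_is_mult_pairs R a_meas abs_a_le_1 a_eq_1_if_nonzero)
  finally show ?thesis .
qed

text \<open>Conditionally on \<open>tally R = m\<close>, \<open>\<Sum>\<^sub>R b\<close> is binomial with parameters \<open>m\<close> and
  \<open>mean_b / mean_a\<close>.\<close>

lemma integral_tally_is_mult_sum_b_mult_sum_c:
  assumes R: "R \<subseteq> I"
  shows "(\<integral>x. tally_is R m x * ((\<Sum>l\<in>R. b (x l)) * (tally R x - (\<Sum>l\<in>R. b (x l)))) \<partial>M)
    = (mean_b / mean_a) * (1 - mean_b / mean_a) * (m * (m - 1) * (\<integral>x. tally_is R m x \<partial>M))"
  unfolding integral_tally_is_mult_bc_pairs[OF R] integral_tally_is_falling_factorial[OF R]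
proof (cases "mean_a = 0")
  case True
  then show "mean_b * mean_c * pair_mass R m
      = mean_b / mean_a * (1 - mean_b / mean_a) * (mean_a * mean_a * pair_mass R m)"
    using mean_b_nonneg mean_c_nonneg mean_a_eq by simp
next
  case False
  show "mean_b * mean_c * pair_mass R m
      = mean_b / mean_a * (1 - mean_b / mean_a) * (mean_a * mean_a * pair_mass R m)"
  proof -
    have c: "1 - mean_b / mean_a = mean_c / mean_a" using False mean_a_eq by (simp add: field_simps)
    show ?thesis unfolding c using False by (simp add: field_simps)
  qed
qed

lemma integral_tally:
  assumes E: "E \<subseteq> I"
  shows "(\<integral>x. tally E x \<partial>M) = real (card E) * mean_a"
proof -
  have "(\<integral>x. tally E x \<partial>M) = (\<Sum>i\<in>E. \<integral>x. a (x i) \<partial>M)"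
    unfolding tally_def
    by (rule Bochner_Integration.integral_sum)
       (use E in \<open>auto intro!: integrable_bounded[where B=1] measurable_component abs_a_le_1\<close>)
  also have "\<dots> = (\<Sum>i\<in>E. mean_a)"
    unfolding mean_a_def using E by (intro sum.cong refl integral_component[OF _ a_meas abs_a_le_1]) auto
  finally show ?thesis by simp
qed

end

section \<open>A single censored unit\<close>

text \<open>For a unit whose event time is at least \<open>t\<close>, \<open>risk t\<close> indicates that it is still at risk at
  \<open>t\<close>; \<open>risk1 t\<close> and \<open>risk0 t\<close> split this by arm.\<close>

definition cens_time :: "bool \<times> ennreal \<times> ennreal \<Rightarrow> ennreal" where
  "cens_time u = (if fst u then fst (snd u) else snd (snd u))"

definition risk :: "real \<Rightarrow> bool \<times> ennreal \<times> ennreal \<Rightarrow> real" where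
  "risk t u = (if ennreal t \<le> cens_time u then 1 else 0)"

definition risk1 :: "real \<Rightarrow> bool \<times> ennreal \<times> ennreal \<Rightarrow> real" where
  "risk1 t u = (if fst u \<and> ennreal t \<le> cens_time u then 1 else 0)"

definition risk0 :: "real \<Rightarrow> bool \<times> ennreal \<times> ennreal \<Rightarrow> real" where
  "risk0 t u = (if \<not> fst u \<and> ennreal t \<le> cens_time u then 1 else 0)"

lemma risk_nonneg: "0 \<le> risk t u"
  by (simp add: risk_def)

locale censored_unit =
  fixes p :: real and \<mu> :: "(ennreal \<times> ennreal) measure"
  assumes p_pos: "0 < p" and p_lt1: "p < 1"
    and prob_space_\<mu>: "prob_space \<mu>" and sets_\<mu>: "sets \<mu> = sets borel"
begin

lemma prob_space_unit_law: "prob_space (unit_law p \<mu>)"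
  unfolding unit_law_def by (intro prob_space_pair prob_space_measure_pmf prob_space_\<mu>)

lemma finite_measure_unit_law: "finite_measure (unit_law p \<mu>)"
  using prob_space_unit_law by (rule prob_space.finite_measure)

lemma prob_space_pop_space: "prob_space (pop_space n p \<mu>)"
  unfolding pop_space_def by (rule prob_space_PiM) (rule prob_space_unit_law)

lemma sets_unit_law:
  "sets (unit_law p \<mu>) = sets (count_space UNIV \<Otimes>\<^sub>M ((borel :: ennreal measure) \<Otimes>\<^sub>M (borel :: ennreal measure)))"
proof -
  have "sets \<mu> = sets ((borel :: ennreal measure) \<Otimes>\<^sub>M (borel :: ennreal measure))"
    by (simp only: sets_\<mu> borel_prod)
  then show ?thesis unfolding unit_law_def by (intro sets_pair_measure_cong) simp_all
qed

lemma cens_time_meas[measurable]: "cens_time \<in> borel_measurable (unit_law p \<mu>)"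
  unfolding measurable_cong_sets[OF sets_unit_law refl] cens_time_def by measurable

lemma fst_meas[measurable]: "fst \<in> measurable (unit_law p \<mu>) (count_space UNIV)"
  unfolding measurable_cong_sets[OF sets_unit_law refl] by measurable

lemma risk_meas: "risk t \<in> borel_measurable (unit_law p \<mu>)"
  unfolding risk_def by measurable

lemma risk1_meas: "risk1 t \<in> borel_measurable (unit_law p \<mu>)"
  unfolding risk1_def by measurable

lemma risk0_meas: "risk0 t \<in> borel_measurable (unit_law p \<mu>)"
  unfolding risk0_def by measurable

lemma split_count_risk: "split_count (unit_law p \<mu>) {..<(n::nat)} (risk t) (risk1 t) (risk0 t)"
proof (intro split_count.intro iid_product.intro split_count_axioms.intro)
  show "prob_space (unit_law p \<mu>)" by (rule prob_space_unit_law)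
  show "finite {..<n}" by simp
  show "risk1 t \<in> borel_measurable (unit_law p \<mu>)" by (rule risk1_meas)
  show "risk0 t \<in> borel_measurable (unit_law p \<mu>)" by (rule risk0_meas)
qed (auto simp: risk_def risk1_def risk0_def)

lemma integral_unit_law:
  fixes f :: "bool \<times> ennreal \<times> ennreal \<Rightarrow> real"
  assumes f_meas: "f \<in> borel_measurable (unit_law p \<mu>)" and f_bound: "\<And>u. \<bar>f u\<bar> \<le> 1"
  shows "(\<integral>u. f u \<partial>unit_law p \<mu>) = p * (\<integral>y. f (True, y) \<partial>\<mu>) + (1 - p) * (\<integral>y. f (False, y) \<partial>\<mu>)"
proof -
  interpret P: pair_prob_space "measure_pmf (bernoulli_pmf p)" \<mu>
    by (intro pair_prob_space.intro pair_sigma_finite.intro prob_space_imp_sigma_finite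
        prob_space_measure_pmf prob_space_\<mu>)
  have "integrable (unit_law p \<mu>) f"
    using finite_measure.integrable_const_bound[OF finite_measure_unit_law, of f 1] f_meas f_bound by auto
  then have "(\<integral>u. f u \<partial>unit_law p \<mu>) = (\<integral>z. (\<integral>y. f (z, y) \<partial>\<mu>) \<partial>measure_pmf (bernoulli_pmf p))"
    unfolding unit_law_def by (simp add: P.integral_fst')
  then show ?thesis using p_pos p_lt1 by (simp add: algebra_simps)
qed

lemma integral_indicator_le:
  "(\<integral>y. (if ennreal t \<le> g y then 1 else 0) \<partial>\<mu>) = measure \<mu> {y \<in> space \<mu>. ennreal t \<le> g y}"
proof -
  have "(\<integral>y. (if ennreal t \<le> g y then 1 else 0) \<partial>\<mu>) = (\<integral>y. indicator {y. ennreal t \<le> g y} y \<partial>\<mu>)"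
    by (intro Bochner_Integration.integral_cong) (auto simp: indicator_def)
  also have "\<dots> = measure \<mu> {y \<in> space \<mu>. ennreal t \<le> g y}"
    by (simp add: Int_def conj_commute)
  finally show ?thesis .
qed

lemma integral_risk1: "(\<integral>u. risk1 t u \<partial>unit_law p \<mu>) = p * Gz \<mu> True t"
  by (subst integral_unit_law) (auto simp: risk1_meas risk1_def cens_time_def Gz_def integral_indicator_le)

lemma integral_risk0: "(\<integral>u. risk0 t u \<partial>unit_law p \<mu>) = (1 - p) * Gz \<mu> False t"
  by (subst integral_unit_law) (auto simp: risk0_meas risk0_def cens_time_def Gz_def integral_indicator_le)

lemma integral_risk: "(\<integral>u. risk t u \<partial>unit_law p \<mu>) = Gmix p \<mu> t"
proof -
  interpret C: split_count "unit_law p \<mu>" "{..<0::nat}" "risk t" "risk1 t" "risk0 t"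
    by (rule split_count_risk)
  show ?thesis
    using C.mean_a_eq unfolding C.mean_a_def C.mean_b_def C.mean_c_def integral_risk1 integral_risk0
    by (simp add: Gmix_def)
qed

lemma Gz_bounds: "0 \<le> Gz \<mu> z t" "Gz \<mu> z t \<le> 1"
  using prob_space.prob_le_1[OF prob_space_\<mu>] by (auto simp: Gz_def)

lemma Gmix_bounds: "0 \<le> Gmix p \<mu> t" "Gmix p \<mu> t \<le> 1"
proof -
  have "0 \<le> p * Gz \<mu> True t" "0 \<le> (1 - p) * Gz \<mu> False t"
    "p * Gz \<mu> True t \<le> p" "(1 - p) * Gz \<mu> False t \<le> 1 - p"
    using Gz_bounds p_pos p_lt1 by (simp_all add: mult_left_le)
  then show "0 \<le> Gmix p \<mu> t" "Gmix p \<mu> t \<le> 1"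
    unfolding Gmix_def by linarith+
qed

lemma treated_fraction_bounds: "0 \<le> p * Gz \<mu> True t / Gmix p \<mu> t" "p * Gz \<mu> True t / Gmix p \<mu> t \<le> 1"
proof -
  have "0 \<le> p * Gz \<mu> True t" "0 \<le> (1 - p) * Gz \<mu> False t"
    using Gz_bounds p_pos p_lt1 by simp_all
  then show "0 \<le> p * Gz \<mu> True t / Gmix p \<mu> t" "p * Gz \<mu> True t / Gmix p \<mu> t \<le> 1"
    by (auto simp: Gmix_def divide_le_eq_1)
qed

end

section \<open>The population under the null hypothesis\<close>

locale null_population = censored_unit +
  fixes n :: nat and T1 T0 :: "nat \<Rightarrow> real"
  assumes T0_nonneg: "\<And>i. i < n \<Longrightarrow> 0 \<le> T0 i" and H0: "\<And>i. i < n \<Longrightarrow> T1 i = T0 i"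
begin

abbreviation "K \<equiv> Ktimes n T0"
abbreviation "tt k \<equiv> tk n T0 k"

definition risk_set :: "nat \<Rightarrow> nat set" where
  "risk_set k = {i. i < n \<and> tt k \<le> T0 i}"

definition tie_set :: "nat \<Rightarrow> nat set" where
  "tie_set k = {i. i < n \<and> T0 i = tt k}"

lemma tk_mem: "k \<in> {1..K} \<Longrightarrow> tt k \<in> T0 ` {..<n}"
proof -
  assume "k \<in> {1..K}"
  then have "k - 1 < length (sorted_list_of_set (T0 ` {..<n}))"
    by (auto simp: Ktimes_def)
  then have "tt k \<in> set (sorted_list_of_set (T0 ` {..<n}))"
    unfolding tk_def by (rule nth_mem)
  then show ?thesis by simp
qed

lemma inj_on_tk: "inj_on tt {1..K}"
proof (rule inj_onI)
  fix k k' assume k: "k \<in> {1..K}" and k': "k' \<in> {1..K}" and eq: "tt k = tt k'"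
  have "k - 1 < length (sorted_list_of_set (T0 ` {..<n}))"
    "k' - 1 < length (sorted_list_of_set (T0 ` {..<n}))"
    using k k' by (auto simp: Ktimes_def)
  then have "k - 1 = k' - 1"
    using eq nth_eq_iff_index_eq[OF distinct_sorted_list_of_set] unfolding tk_def by blast
  then show "k = k'" using k k' by auto
qed

lemma tk_nonneg: "k \<in> {1..K} \<Longrightarrow> 0 \<le> tt k"
  using tk_mem T0_nonneg by fastforce

lemma tie_set_subset_risk_set: "tie_set k \<subseteq> risk_set k"
  unfolding tie_set_def risk_set_def by auto

lemma risk_set_subset: "risk_set k \<subseteq> {..<n}"
  unfolding risk_set_def by auto

lemma tie_set_subset: "tie_set k \<subseteq> {..<n}"
  unfolding tie_set_def by auto

lemma finite_risk_set: "finite (risk_set k)"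
  using risk_set_subset finite_subset by blast

lemma risk_set_nonempty: "k \<in> {1..K} \<Longrightarrow> risk_set k \<noteq> {}"
  using tk_mem tie_set_subset_risk_set unfolding tie_set_def by force

lemma hk_eq: "hk n T0 k = real (card (tie_set k)) / real (card (risk_set k))"
  unfolding hk_def dk_def nk_def tie_set_def risk_set_def ..

lemma Tr_eq: "i < n \<Longrightarrow> Tr T1 T0 x i = T0 i"
  using H0 by (simp add: Tr_def)

lemma Cr_eq: "Cr x i = cens_time (x i)"
  by (simp add: Cr_def Zr_def cens_time_def)

lemma Nk_eq: "Nk n T1 T0 k x = (\<Sum>i\<in>risk_set k. risk (tt k) (x i))"
proof -
  have "{i. i < n \<and> ennreal (tt k) \<le> Wr T1 T0 x i} = {i \<in> risk_set k. ennreal (tt k) \<le> cens_time (x i)}"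
    using T0_nonneg by (auto simp: risk_set_def Wr_def Tr_eq Cr_eq ennreal_le_iff)
  then show ?thesis unfolding Nk_def using card_filter_eq_sum[OF finite_risk_set] by (simp add: risk_def)
qed

lemma N1k_eq: "N1k n T1 T0 k x = (\<Sum>i\<in>risk_set k. risk1 (tt k) (x i))"
proof -
  have "{i. i < n \<and> Zr x i \<and> ennreal (tt k) \<le> Wr T1 T0 x i}
      = {i \<in> risk_set k. fst (x i) \<and> ennreal (tt k) \<le> cens_time (x i)}"
    using T0_nonneg by (auto simp: risk_set_def Wr_def Tr_eq Cr_eq ennreal_le_iff Zr_def)
  then show ?thesis unfolding N1k_def using card_filter_eq_sum[OF finite_risk_set] by (simp add: risk1_def)
qed

lemma Dk_eq:
  assumes k: "k \<in> {1..K}"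
  shows "Dk n T1 T0 k x = (\<Sum>i\<in>tie_set k. risk (tt k) (x i))"
proof -
  have "{i. i < n \<and> Delta T1 T0 x i \<and> Wr T1 T0 x i = ennreal (tt k)}
      = {i \<in> tie_set k. ennreal (tt k) \<le> cens_time (x i)}"
  proof (intro set_eqI iffI)
    fix i assume "i \<in> {i. i < n \<and> Delta T1 T0 x i \<and> Wr T1 T0 x i = ennreal (tt k)}"
    then have i: "i < n" "ennreal (T0 i) \<le> cens_time (x i)"
      "min (ennreal (T0 i)) (cens_time (x i)) = ennreal (tt k)"
      by (auto simp: Delta_def Wr_def Tr_eq Cr_eq)
    then have "T0 i = tt k" using T0_nonneg[OF i(1)] tk_nonneg[OF k] by (simp add: min_def)
    then show "i \<in> {i \<in> tie_set k. ennreal (tt k) \<le> cens_time (x i)}" using i by (auto simp: tie_set_def)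
  qed (auto simp: tie_set_def Delta_def Wr_def Tr_eq Cr_eq min_def)
  then show ?thesis
    unfolding Dk_def using card_filter_eq_sum[OF finite_subset[OF tie_set_subset]] by (simp add: risk_def)
qed

lemma Dk_bounds:
  assumes k: "k \<in> {1..K}"
  shows "0 \<le> Dk n T1 T0 k x" "Dk n T1 T0 k x \<le> Nk n T1 T0 k x"
  unfolding Dk_eq[OF k] Nk_eq
  by (simp_all add: sum_nonneg risk_nonneg sum_mono2[OF finite_risk_set tie_set_subset_risk_set])

definition xi_coef :: "nat \<Rightarrow> real" where
  "xi_coef k = (1 - hk n T0 k) * phik n p \<mu> T0 k * (1 - phik n p \<mu> T0 k)"

lemma xi_coef_bounds:
  assumes k: "k \<in> {1..K}"
  shows "0 \<le> xi_coef k" "xi_coef k \<le> 1"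
proof -
  have "card (tie_set k) \<le> card (risk_set k)"
    by (rule card_mono[OF finite_risk_set tie_set_subset_risk_set])
  moreover have "0 < card (risk_set k)"
    using risk_set_nonempty[OF k] finite_risk_set by (simp add: card_gt_0_iff)
  ultimately have h: "0 \<le> 1 - hk n T0 k" "1 - hk n T0 k \<le> 1"
    unfolding hk_eq by (auto simp: field_simps)
  have "0 \<le> phik n p \<mu> T0 k" "phik n p \<mu> T0 k \<le> 1"
    unfolding phik_def by (rule treated_fraction_bounds)+
  then have "0 \<le> phik n p \<mu> T0 k * (1 - phik n p \<mu> T0 k)" "phik n p \<mu> T0 k * (1 - phik n p \<mu> T0 k) \<le> 1"
    by (auto intro: mult_le_one)
  with h show "0 \<le> xi_coef k" "xi_coef k \<le> 1"
    unfolding xi_coef_def by (metis mult.assoc mult_le_one mult_nonneg_nonneg)+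
qed

lemma pop_space_eq: "pop_space n p \<mu> = PiM {..<n} (\<lambda>_. unit_law p \<mu>)"
  by (simp add: pop_space_def)

lemma cond_exp_Nk_minus_Dk:
  assumes k: "k \<in> {1..K}"
    and pos: "measure (pop_space n p \<mu>) {x \<in> space (pop_space n p \<mu>). Nk n T1 T0 k x = Nk n T1 T0 k \<omega>} \<noteq> 0"
  shows "cond_exp_disc (pop_space n p \<mu>) (\<lambda>x. Nk n T1 T0 k x - Dk n T1 T0 k x) (Nk n T1 T0 k) \<omega>
    = (1 - hk n T0 k) * Nk n T1 T0 k \<omega>"
proof -
  interpret C: split_count "unit_law p \<mu>" "{..<n}" "risk (tt k)" "risk1 (tt k)" "risk0 (tt k)"
    by (rule split_count_risk)
  have N: "Nk n T1 T0 k = C.tally (risk_set k)" by (rule ext) (simp add: Nk_eq C.tally_def)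
  have D: "Dk n T1 T0 k = C.tally (tie_set k)" by (rule ext) (simp add: Dk_eq[OF k] C.tally_def)
  have "(\<integral>x. C.tally_is (risk_set k) (C.tally (risk_set k) \<omega>) x \<partial>C.M) \<noteq> 0"
    using pos unfolding pop_space_eq N C.measure_tally_eq[OF risk_set_subset] .
  then show ?thesis
    unfolding pop_space_eq N D C.cond_exp_disc_tally[OF risk_set_subset] hk_eq
      C.integral_tally_is_mult_tally_diff[OF tie_set_subset_risk_set risk_set_subset risk_set_nonempty[OF k]]
    by simp
qed

lemma cond_exp_N1k_mult_Nk_minus_N1k:
  assumes k: "k \<in> {1..K}"
    and pos: "measure (pop_space n p \<mu>) {x \<in> space (pop_space n p \<mu>). Nk n T1 T0 k x = Nk n T1 T0 k \<omega>} \<noteq> 0"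
  shows "cond_exp_disc (pop_space n p \<mu>) (\<lambda>x. N1k n T1 T0 k x * (Nk n T1 T0 k x - N1k n T1 T0 k x))
      (Nk n T1 T0 k) \<omega>
    = phik n p \<mu> T0 k * (1 - phik n p \<mu> T0 k) * (Nk n T1 T0 k \<omega> * (Nk n T1 T0 k \<omega> - 1))"
proof -
  interpret C: split_count "unit_law p \<mu>" "{..<n}" "risk (tt k)" "risk1 (tt k)" "risk0 (tt k)"
    by (rule split_count_risk)
  have N: "Nk n T1 T0 k = C.tally (risk_set k)" by (rule ext) (simp add: Nk_eq C.tally_def)
  have N1: "N1k n T1 T0 k = (\<lambda>x. \<Sum>l\<in>risk_set k. risk1 (tt k) (x l))" by (rule ext) (simp add: N1k_eq)
  have phi: "phik n p \<mu> T0 k = C.mean_b / C.mean_a"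
    unfolding C.mean_a_def C.mean_b_def integral_risk integral_risk1 phik_def ..
  have "(\<integral>x. C.tally_is (risk_set k) (C.tally (risk_set k) \<omega>) x \<partial>C.M) \<noteq> 0"
    using pos unfolding pop_space_eq N C.measure_tally_eq[OF risk_set_subset] .
  then show ?thesis
    unfolding pop_space_eq N N1 C.cond_exp_disc_tally[OF risk_set_subset] phi
      C.integral_tally_is_mult_sum_b_mult_sum_c[OF risk_set_subset]
    by simp
qed

lemma integral_Dk:
  assumes k: "k \<in> {1..K}"
  shows "(\<integral>x. Dk n T1 T0 k x \<partial>pop_space n p \<mu>) = real (card (tie_set k)) * Gmix p \<mu> (tt k)"
proof -
  interpret C: split_count "unit_law p \<mu>" "{..<n}" "risk (tt k)" "risk1 (tt k)" "risk0 (tt k)"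
    by (rule split_count_risk)
  have D: "Dk n T1 T0 k = C.tally (tie_set k)" by (rule ext) (simp add: Dk_eq[OF k] C.tally_def)
  show ?thesis
    unfolding pop_space_eq D C.integral_tally[OF tie_set_subset] C.mean_a_def integral_risk ..
qed

text \<open>The case \<open>N\<^sub>k = 1\<close> is exceptional because there the first term of \<open>\<xi>\<^sub>3\<^sub>k\<close> divides by
  \<open>N\<^sub>k - 1 = 0\<close> and so vanishes (\<open>x / 0 = 0\<close>).\<close>

lemma xi3_eq:
  assumes k: "k \<in> {1..K}"
    and pos: "measure (pop_space n p \<mu>) {x \<in> space (pop_space n p \<mu>). Nk n T1 T0 k x = Nk n T1 T0 k \<omega>} \<noteq> 0"
  shows "xi3 n p \<mu> T1 T0 k \<omega>
    = xi_coef k * (Dk n T1 T0 k \<omega> - real (card (tie_set k)) * Gmix p \<mu> (tt k))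
      - (if Nk n T1 T0 k \<omega> = 1 then xi_coef k * Dk n T1 T0 k \<omega> else 0)"
proof -
  define m where "m = Nk n T1 T0 k \<omega>"
  define d where "d = Dk n T1 T0 k \<omega>"
  have xi: "xi3 n p \<mu> T1 T0 k \<omega>
      = d * ((1 - hk n T0 k) * m) * (phik n p \<mu> T0 k * (1 - phik n p \<mu> T0 k) * (m * (m - 1)))
          / (m\<^sup>2 * (m - 1))
        - real (card (tie_set k)) * Gmix p \<mu> (tt k) * (1 - hk n T0 k) * phik n p \<mu> T0 k
          * (1 - phik n p \<mu> T0 k)"
    unfolding xi3_def Let_def cond_exp_Nk_minus_Dk[OF k pos] cond_exp_N1k_mult_Nk_minus_N1k[OF k pos]
      integral_Dk[OF k] m_def d_def ..
  consider "m = 1" | "m = 0" | "m \<noteq> 0" "m \<noteq> 1" by blast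
  then show ?thesis
  proof cases
    case 1
    then show ?thesis unfolding xi m_def[symmetric] d_def[symmetric] xi_coef_def by (simp add: algebra_simps)
  next
    case 2
    then have "d = 0" using Dk_bounds[OF k, of \<omega>] unfolding m_def d_def by simp
    then show ?thesis unfolding xi m_def[symmetric] d_def[symmetric] xi_coef_def using 2 by simp
  next
    case 3
    then show ?thesis unfolding xi m_def[symmetric] d_def[symmetric] xi_coef_def
      by (simp add: field_simps power2_eq_square)
  qed
qed

lemma Nk_meas: "Nk n T1 T0 k \<in> borel_measurable (pop_space n p \<mu>)"
proof -
  interpret C: split_count "unit_law p \<mu>" "{..<n}" "risk (tt k)" "risk1 (tt k)" "risk0 (tt k)"
    by (rule split_count_risk)
  have "Nk n T1 T0 k = C.tally (risk_set k)" by (rule ext) (simp add: Nk_eq C.tally_def)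
  then show ?thesis unfolding pop_space_eq using C.tally_meas[OF risk_set_subset] by simp
qed

lemma Nk_range: "Nk n T1 T0 k x \<in> real ` {..n}"
proof -
  have "card {i. i < n \<and> ennreal (tt k) \<le> Wr T1 T0 x i} \<le> card {..<n}"
    by (rule card_mono) auto
  then show ?thesis unfolding Nk_def by auto
qed

text \<open>\<open>N\<^sub>k\<close> takes finitely many values, so almost surely its observed value has positive
  probability and the conditional expectations in \<open>\<xi>\<^sub>3\<^sub>k\<close> are genuine.\<close>

lemma AE_Nk_value_pos:
  "AE \<omega> in pop_space n p \<mu>. \<forall>k\<in>{1..<K}.
     measure (pop_space n p \<mu>) {x \<in> space (pop_space n p \<mu>). Nk n T1 T0 k x = Nk n T1 T0 k \<omega>} \<noteq> 0"
proof (rule AE_finite_allI)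
  fix k
  let ?M = "pop_space n p \<mu>" and ?N = "Nk n T1 T0 k"
  interpret M: prob_space ?M by (rule prob_space_pop_space)
  have [measurable]: "?N \<in> borel_measurable ?M" by (rule Nk_meas)
  have "AE \<omega> in ?M. ?N \<omega> = v \<longrightarrow> measure ?M {x \<in> space ?M. ?N x = v} \<noteq> 0" for v
  proof (cases "measure ?M {x \<in> space ?M. ?N x = v} = 0")
    case True
    have "{x \<in> space ?M. ?N x = v} \<in> null_sets ?M"
      using True by (auto simp: null_sets_def M.emeasure_eq_measure)
    then show ?thesis by (rule AE_I') (use True in auto)
  qed simp
  then have "AE \<omega> in ?M. \<forall>v\<in>real ` {..n}. ?N \<omega> = v \<longrightarrow> measure ?M {x \<in> space ?M. ?N x = v} \<noteq> 0"
    by (intro AE_finite_allI) auto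
  then show "AE \<omega> in ?M. measure ?M {x \<in> space ?M. ?N x = ?N \<omega>} \<noteq> 0"
    by (rule AE_mp) (use Nk_range in auto)
qed simp

lemma Nk_ge_2_if_later_death:
  assumes k1: "k1 \<in> {1..K}" and k2: "k2 \<in> {1..K}" and lt: "tt k1 < tt k2"
    and D1: "Dk n T1 T0 k1 x \<noteq> 0" and D2: "Dk n T1 T0 k2 x \<noteq> 0"
  shows "2 \<le> Nk n T1 T0 k1 x"
proof -
  obtain i1 where i1: "i1 \<in> tie_set k1" "risk (tt k1) (x i1) \<noteq> 0"
    using D1 unfolding Dk_eq[OF k1] by (rule sum.not_neutral_contains_not_neutral)
  obtain i2 where i2: "i2 \<in> tie_set k2" "risk (tt k2) (x i2) \<noteq> 0"
    using D2 unfolding Dk_eq[OF k2] by (rule sum.not_neutral_contains_not_neutral)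
  have "ennreal (tt k1) \<le> ennreal (tt k2)" using lt by (simp add: ennreal_leI)
  then have at_risk: "risk (tt k1) (x i1) = 1" "risk (tt k1) (x i2) = 1"
    using i1 i2 by (auto simp: risk_def split: if_splits)
  have "i1 \<in> risk_set k1" "i2 \<in> risk_set k1" "i1 \<noteq> i2"
    using i1 i2 lt tie_set_subset_risk_set by (auto simp: tie_set_def risk_set_def)
  then have "(\<Sum>i\<in>{i1, i2}. risk (tt k1) (x i)) \<le> (\<Sum>i\<in>risk_set k1. risk (tt k1) (x i))"
    by (intro sum_mono2[OF finite_risk_set]) (auto simp: risk_nonneg)
  then show ?thesis unfolding Nk_eq using at_risk \<open>i1 \<noteq> i2\<close> by simp
qed

lemma abs_sum_if_Nk_eq_1_le_1:
  "\<bar>\<Sum>k\<in>{1..<K}. (if Nk n T1 T0 k x = 1 then xi_coef k * Dk n T1 T0 k x else 0)\<bar> \<le> 1"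
proof -
  define Q where "Q = {k \<in> {1..<K}. Nk n T1 T0 k x = 1 \<and> Dk n T1 T0 k x \<noteq> 0}"
  have Q_sub: "Q \<subseteq> {1..K}" unfolding Q_def by auto
  have sum_eq: "(\<Sum>k\<in>{1..<K}. (if Nk n T1 T0 k x = 1 then xi_coef k * Dk n T1 T0 k x else 0))
      = (\<Sum>k\<in>Q. xi_coef k * Dk n T1 T0 k x)"
    by (rule sum.mono_neutral_cong_right) (auto simp: Q_def)
  have "k = k'" if "k \<in> Q" "k' \<in> Q" for k k'
  proof (rule ccontr)
    assume "k \<noteq> k'"
    with that Q_sub have "tt k < tt k' \<or> tt k' < tt k"
      using inj_on_tk by (metis inj_onD linorder_neqE_linordered_idom subsetD)
    then show False
      using that Q_sub Nk_ge_2_if_later_death[of k k' x] Nk_ge_2_if_later_death[of k' k x]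
      unfolding Q_def by auto
  qed
  then have card_Q: "card Q \<le> 1"
    using card_le_Suc0_iff_eq[of Q] finite_subset[OF Q_sub] by fastforce
  have bounds: "0 \<le> xi_coef k * Dk n T1 T0 k x \<and> xi_coef k * Dk n T1 T0 k x \<le> 1" if "k \<in> Q" for k
    using that Q_sub xi_coef_bounds[of k] Dk_bounds[of k x] unfolding Q_def
    by (auto intro: mult_le_one)
  have "0 \<le> (\<Sum>k\<in>Q. xi_coef k * Dk n T1 T0 k x)"
    by (rule sum_nonneg) (use bounds in auto)
  moreover have "(\<Sum>k\<in>Q. xi_coef k * Dk n T1 T0 k x) \<le> (\<Sum>k\<in>Q. 1)"
    by (rule sum_mono) (use bounds in auto)
  ultimately show ?thesis unfolding sum_eq using card_Q by simp
qed

definition unit_score :: "nat \<Rightarrow> bool \<times> ennreal \<times> ennreal \<Rightarrow> real" where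
  "unit_score i u = (\<Sum>k\<in>{1..<K}. (if T0 i = tt k then xi_coef k else 0) * (risk (tt k) u - Gmix p \<mu> (tt k)))"

lemma sum_centred_Dk_eq_sum_unit_score:
  "(\<Sum>k\<in>{1..<K}. xi_coef k * (Dk n T1 T0 k x - real (card (tie_set k)) * Gmix p \<mu> (tt k)))
    = (\<Sum>i\<in>{..<n}. unit_score i (x i))"
proof -
  have "xi_coef k * (Dk n T1 T0 k x - real (card (tie_set k)) * Gmix p \<mu> (tt k))
      = (\<Sum>i\<in>{..<n}. (if T0 i = tt k then xi_coef k else 0) * (risk (tt k) (x i) - Gmix p \<mu> (tt k)))"
    if k: "k \<in> {1..<K}" for k
  proof -
    have "xi_coef k * (Dk n T1 T0 k x - real (card (tie_set k)) * Gmix p \<mu> (tt k))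
        = (\<Sum>i\<in>tie_set k. xi_coef k * (risk (tt k) (x i) - Gmix p \<mu> (tt k)))"
      using k by (simp add: Dk_eq sum_subtractf sum_distrib_left algebra_simps)
    also have "\<dots> = (\<Sum>i\<in>{..<n}. (if T0 i = tt k then xi_coef k else 0) * (risk (tt k) (x i) - Gmix p \<mu> (tt k)))"
    proof -
      have ties: "tie_set k = {i \<in> {..<n}. T0 i = tt k}" unfolding tie_set_def by auto
      show ?thesis unfolding ties by (subst sum.inter_filter) (auto intro: sum.cong)
    qed
    finally show ?thesis .
  qed
  then have "(\<Sum>k\<in>{1..<K}. xi_coef k * (Dk n T1 T0 k x - real (card (tie_set k)) * Gmix p \<mu> (tt k)))
      = (\<Sum>k\<in>{1..<K}. \<Sum>i\<in>{..<n}.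
          (if T0 i = tt k then xi_coef k else 0) * (risk (tt k) (x i) - Gmix p \<mu> (tt k)))"
    by (rule sum.cong[OF refl])
  also have "\<dots> = (\<Sum>i\<in>{..<n}. unit_score i (x i))"
    unfolding unit_score_def by (rule sum.swap)
  finally show ?thesis .
qed

lemma abs_unit_score_le_1: "\<bar>unit_score i u\<bar> \<le> 1"
proof -
  define Q where "Q = {k \<in> {1..<K}. T0 i = tt k}"
  have Q_sub: "Q \<subseteq> {1..K}" unfolding Q_def by auto
  have score: "unit_score i u = (\<Sum>k\<in>Q. xi_coef k * (risk (tt k) u - Gmix p \<mu> (tt k)))"
    unfolding unit_score_def Q_def by (subst sum.inter_filter) (auto intro: sum.cong)
  have "card Q \<le> 1"
    using inj_on_tk Q_sub card_le_Suc0_iff_eq[of Q] finite_subset[OF Q_sub]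
    unfolding Q_def by (auto dest: inj_onD)
  moreover have "\<bar>xi_coef k * (risk (tt k) u - Gmix p \<mu> (tt k))\<bar> \<le> 1" if "k \<in> Q" for k
  proof -
    have k: "k \<in> {1..K}" using that Q_sub by auto
    have "\<bar>risk (tt k) u - Gmix p \<mu> (tt k)\<bar> \<le> 1" using Gmix_bounds[of "tt k"] by (auto simp: risk_def)
    then show ?thesis using xi_coef_bounds[OF k] by (simp add: abs_mult mult_le_one)
  qed
  then have "(\<Sum>k\<in>Q. \<bar>xi_coef k * (risk (tt k) u - Gmix p \<mu> (tt k))\<bar>) \<le> (\<Sum>k\<in>Q. 1)"
    by (rule sum_mono)
  then have "\<bar>unit_score i u\<bar> \<le> card Q"
    unfolding score by (simp add: order_trans[OF sum_abs])
  ultimately show ?thesis by linarith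
qed

lemma unit_score_meas: "unit_score i \<in> borel_measurable (unit_law p \<mu>)"
  unfolding unit_score_def by (intro borel_measurable_sum borel_measurable_times borel_measurable_diff risk_meas) auto

lemma integral_unit_score: "(\<integral>u. unit_score i u \<partial>unit_law p \<mu>) = 0"
proof -
  have int: "integrable (unit_law p \<mu>) (risk t)" for t
    by (rule finite_measure.integrable_const_bound[OF finite_measure_unit_law, where B=1])
       (auto simp: risk_meas risk_def)
  interpret U: prob_space "unit_law p \<mu>" by (rule prob_space_unit_law)
  have "(\<integral>u. risk (tt k) u - Gmix p \<mu> (tt k) \<partial>unit_law p \<mu>) = 0" for k
    by (simp add: int integral_risk U.prob_space)
  then show ?thesis unfolding unit_score_def by (simp add: int)
qed

lemma xi3_sum_dominated:
  "\<exists>X. X \<in> borel_measurable (pop_space n p \<mu>) \<and> integrable (pop_space n p \<mu>) (\<lambda>x. (X x)\<^sup>2)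
     \<and> (\<integral>x. (X x)\<^sup>2 \<partial>pop_space n p \<mu>) \<le> real n
     \<and> (AE \<omega> in pop_space n p \<mu>. \<bar>\<Sum>k\<in>{1..<K}. xi3 n p \<mu> T1 T0 k \<omega>\<bar> \<le> \<bar>X \<omega>\<bar> + 1)"
proof (intro exI conjI)
  interpret P: iid_product "unit_law p \<mu>" "{..<n}"
    by (intro iid_product.intro prob_space_unit_law) simp
  let ?X = "\<lambda>x. \<Sum>i\<in>{..<n}. unit_score i (x i)"
  have abs_X: "\<bar>?X x\<bar> \<le> real n" for x
  proof -
    have "\<bar>?X x\<bar> \<le> (\<Sum>i\<in>{..<n}. \<bar>unit_score i (x i)\<bar>)" by (rule sum_abs)
    also have "\<dots> \<le> (\<Sum>i\<in>{..<n}. 1)" by (intro sum_mono abs_unit_score_le_1)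
    finally show ?thesis by simp
  qed
  show X_meas: "?X \<in> borel_measurable (pop_space n p \<mu>)"
    unfolding pop_space_eq by (intro borel_measurable_sum P.measurable_component unit_score_meas) auto
  show "integrable (pop_space n p \<mu>) (\<lambda>x. (?X x)\<^sup>2)"
    unfolding pop_space_eq
  proof (rule P.integrable_bounded[where B="real n ^ 2"])
    show "(\<lambda>x. (?X x)\<^sup>2) \<in> borel_measurable P.M" using X_meas unfolding pop_space_eq by simp
    show "\<bar>(?X x)\<^sup>2\<bar> \<le> real n ^ 2" for x
      using abs_X[of x] abs_le_square_iff[of "?X x" "real n"] by simp
  qed
  show "(\<integral>x. (?X x)\<^sup>2 \<partial>pop_space n p \<mu>) \<le> real n"
    unfolding pop_space_eq
    using P.integral_sum_components_squared_le[OF unit_score_meas abs_unit_score_le_1 integral_unit_score]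
    by simp
  show "AE \<omega> in pop_space n p \<mu>. \<bar>\<Sum>k\<in>{1..<K}. xi3 n p \<mu> T1 T0 k \<omega>\<bar> \<le> \<bar>?X \<omega>\<bar> + 1"
    using AE_Nk_value_pos
  proof (rule AE_mp, intro AE_I2 impI)
    fix \<omega> assume pos: "\<forall>k\<in>{1..<K}. measure (pop_space n p \<mu>)
      {x \<in> space (pop_space n p \<mu>). Nk n T1 T0 k x = Nk n T1 T0 k \<omega>} \<noteq> 0"
    have "(\<Sum>k\<in>{1..<K}. xi3 n p \<mu> T1 T0 k \<omega>)
        = (\<Sum>k\<in>{1..<K}. xi_coef k * (Dk n T1 T0 k \<omega> - real (card (tie_set k)) * Gmix p \<mu> (tt k))
            - (if Nk n T1 T0 k \<omega> = 1 then xi_coef k * Dk n T1 T0 k \<omega> else 0))"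
      by (intro sum.cong refl xi3_eq) (use pos in auto)
    also have "\<dots> = ?X \<omega> - (\<Sum>k\<in>{1..<K}. (if Nk n T1 T0 k \<omega> = 1 then xi_coef k * Dk n T1 T0 k \<omega> else 0))"
      by (simp only: sum_subtractf sum_centred_Dk_eq_sum_unit_score)
    finally show "\<bar>\<Sum>k\<in>{1..<K}. xi3 n p \<mu> T1 T0 k \<omega>\<bar> \<le> \<bar>?X \<omega>\<bar> + 1"
      using abs_sum_if_Nk_eq_1_le_1[of \<omega>] by linarith
  qed
qed

end

section \<open>Boundedness in probability\<close>

lemma bounded_in_prob_div_sqrt:
  fixes M :: "nat \<Rightarrow> 'a measure" and S :: "nat \<Rightarrow> 'a \<Rightarrow> real"
  assumes prob: "\<And>n. prob_space (M n)"
    and dominated: "\<And>n. \<exists>X. X \<in> borel_measurable (M n) \<and> integrable (M n) (\<lambda>x. (X x)\<^sup>2)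
      \<and> (\<integral>x. (X x)\<^sup>2 \<partial>M n) \<le> real n \<and> (AE x in M n. \<bar>S n x\<bar> \<le> \<bar>X x\<bar> + 1)"
  shows "bounded_in_prob M (\<lambda>n x. S n x / sqrt (real n))"
  unfolding bounded_in_prob_def
proof (intro allI impI)
  fix \<epsilon> :: real assume "0 < \<epsilon>"
  define c where "c = 1 + 1 / \<epsilon>"
  have c: "1 \<le> c" "1 / c\<^sup>2 < \<epsilon>"
  proof -
    show "1 \<le> c" using \<open>0 < \<epsilon>\<close> by (simp add: c_def)
    then have "1 / c\<^sup>2 \<le> 1 / c" by (simp add: power2_eq_square field_simps)
    also have "1 / c = \<epsilon> / (\<epsilon> + 1)" using \<open>0 < \<epsilon>\<close> by (simp add: c_def field_simps)
    also have "\<dots> < \<epsilon>" using \<open>0 < \<epsilon>\<close> by (simp add: field_simps)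
    finally show "1 / c\<^sup>2 < \<epsilon>" .
  qed
  have "measure (M n) {x \<in> space (M n). c + 1 < \<bar>S n x / sqrt (real n)\<bar>} < \<epsilon>" if "1 \<le> n" for n
  proof -
    interpret prob_space "M n" by (rule prob)
    obtain X where X_meas[measurable]: "X \<in> borel_measurable (M n)"
      and X_int: "integrable (M n) (\<lambda>x. (X x)\<^sup>2)" and X_moment: "(\<integral>x. (X x)\<^sup>2 \<partial>M n) \<le> real n"
      and S_X: "AE x in M n. \<bar>S n x\<bar> \<le> \<bar>X x\<bar> + 1"
      using dominated by blast
    have sqrt_n: "1 \<le> sqrt (real n)" using that by simp
    have "prob {x \<in> space (M n). c + 1 < \<bar>S n x / sqrt (real n)\<bar>}
        \<le> prob {x \<in> space (M n). c * sqrt (real n) \<le> \<bar>X x\<bar>}"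
    proof (rule finite_measure_mono_AE)
      show "AE x in M n. x \<in> {x \<in> space (M n). c + 1 < \<bar>S n x / sqrt (real n)\<bar>}
          \<longrightarrow> x \<in> {x \<in> space (M n). c * sqrt (real n) \<le> \<bar>X x\<bar>}"
        using S_X
      proof (rule AE_mp, intro AE_I2 impI)
        fix x assume S_X_x: "\<bar>S n x\<bar> \<le> \<bar>X x\<bar> + 1"
          and "x \<in> {x \<in> space (M n). c + 1 < \<bar>S n x / sqrt (real n)\<bar>}"
        then have "x \<in> space (M n)" and S_large: "c * sqrt (real n) + sqrt (real n) < \<bar>S n x\<bar>"
          using sqrt_n by (simp_all add: abs_divide field_simps)
        moreover have "c * sqrt (real n) \<le> \<bar>X x\<bar>" using S_large S_X_x sqrt_n by linarith
        ultimately show "x \<in> {x \<in> space (M n). c * sqrt (real n) \<le> \<bar>X x\<bar>}" by simp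
      qed
    qed measurable
    also have "\<dots> \<le> (\<integral>x. (X x)\<^sup>2 \<partial>M n) / (c * sqrt (real n))\<^sup>2"
      using second_moment_method[OF X_meas X_int] c(1) sqrt_n by simp
    also have "\<dots> \<le> real n / (c * sqrt (real n))\<^sup>2"
      using X_moment by (simp add: divide_right_mono)
    also have "\<dots> = 1 / c\<^sup>2"
      using that by (simp add: power_mult_distrib)
    finally show ?thesis using c(2) by simp
  qed
  then show "\<exists>B. \<forall>\<^sub>F n in sequentially.
      measure (M n) {x \<in> space (M n). B < \<bar>S n x / sqrt (real n)\<bar>} < \<epsilon>"
    by (intro exI eventually_sequentiallyI)
qed

theorem lemmaA10:
  fixes T1 T0 :: "nat \<Rightarrow> nat \<Rightarrow> real"
    and p :: "nat \<Rightarrow> real"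
    and \<mu> :: "nat \<Rightarrow> (ennreal \<times> ennreal) measure"
  assumes p_pos: "\<And>n. 0 < p n" and p_lt1: "\<And>n. p n < 1"
    and cens_prob: "\<And>n. prob_space (\<mu> n)"
    and cens_sets: "\<And>n. sets (\<mu> n) = sets borel"
    and T1_nonneg: "\<And>n i. i < n \<Longrightarrow> 0 \<le> T1 n i"
    and T0_nonneg: "\<And>n i. i < n \<Longrightarrow> 0 \<le> T0 n i"
    and H0: "\<And>n i. i < n \<Longrightarrow> T1 n i = T0 n i"
  shows "bounded_in_prob (\<lambda>n. pop_space n (p n) (\<mu> n))
           (\<lambda>n \<omega>. (\<Sum>k\<in>{1..<Ktimes n (T0 n)}. xi3 n (p n) (\<mu> n) (T1 n) (T0 n) k \<omega>) / sqrt (real n))"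
proof (rule bounded_in_prob_div_sqrt)
  fix n
  interpret null_population "p n" "\<mu> n" n "T1 n" "T0 n"
    by (intro null_population.intro censored_unit.intro null_population_axioms.intro)
       (simp_all add: p_pos p_lt1 cens_prob cens_sets T0_nonneg H0)
  show "prob_space (pop_space n (p n) (\<mu> n))" by (rule prob_space_pop_space)
  show "\<exists>X. X \<in> borel_measurable (pop_space n (p n) (\<mu> n))
      \<and> integrable (pop_space n (p n) (\<mu> n)) (\<lambda>x. (X x)\<^sup>2)
      \<and> (\<integral>x. (X x)\<^sup>2 \<partial>pop_space n (p n) (\<mu> n)) \<le> real n
      \<and> (AE \<omega> in pop_space n (p n) (\<mu> n).
          \<bar>\<Sum>k\<in>{1..<Ktimes n (T0 n)}. xi3 n (p n) (\<mu> n) (T1 n) (T0 n) k \<omega>\<bar> \<le> \<bar>X \<omega>\<bar> + 1)"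
    by (rule xi3_sum_dominated)
qed

end
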